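(* Let $c\in\mathcal{C}$ and suppose there exist $0\le\theta_1<\theta_2<2\pi$ with $c(\theta_1)=c(\theta_2)$. Then there exist $\theta,\tilde\theta\in[\theta_1,\theta_2]$ (at which $c'$ exists and is nonzero) such that $|\mathrm{angle}(c'(\theta))-\mathrm{angle}(c'(\tilde\theta))|\ge\pi$, with strict inequality unless $c([\theta_1,\theta_2])$ is a segment.
   Context: The plane is identified with $\mathbb{C}$, and $\mathbb{S}^1$ with $[0,2\pi)$. $\mathcal{C}$ denotes the set of Lipschitz maps $c:\mathbb{S}^1\to\mathbb{C}$ with $c'(\theta)\neq 0$ for a.e. $\theta$. For $z\in\mathbb{C}\setminus\{0\}$, $\mathrm{angle}(z)\in[0,2\pi)$ denotes the argument of $z$. *)

theory Defs
  imports "HOL-Analysis.Analysis"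
begin

text \<open>Argument of a nonzero complex number, normalised to [0, 2pi).
  (Isabelle's Arg takes values in (-pi, pi].)\<close>
definition angle :: "complex \<Rightarrow> real" where
  "angle z = (if 0 \<le> Arg z then Arg z else Arg z + 2 * pi)"

text \<open>The class C: Lipschitz maps from the circle S^1 = [0,2pi) to the plane,
  represented as 2pi-periodic maps real => complex, whose derivative exists
  and is nonzero almost everywhere.\<close>
definition curve_class :: "(real \<Rightarrow> complex) \<Rightarrow> bool" where
  "curve_class c \<longleftrightarrow>
     (\<forall>x. c (x + 2 * pi) = c x) \<and>
     (\<exists>L. L-lipschitz_on UNIV c) \<and>
     (AE t in lborel. t \<in> {0..<2*pi} \<longrightarrow>
        c differentiable (at t) \<and> vector_derivative c (at t) \<noteq> 0)"

end

theory Submission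
  imports Defs
begin

text \<open>Suppose the tangent angles at the regular points of (t1, t2) are pairwise within pi.
  Then they all lie in an interval [m, m + pi], i.e. every tangent lies in the closed half-plane
  to the left of w = cis m.  The component Im (c t * cnj w) of c orthogonal to w is then a
  Lipschitz function with almost everywhere nonnegative derivative and equal values at t1 and t2,
  hence constant: c([t1, t2]) lies on a line parallel to w and is a segment, and almost every
  tangent is a real multiple of w.  The component Re (c t * cnj w) along w also returns to its
  initial value while its derivative is almost everywhere nonzero, so that derivative takes both
  signs; the tangents w and -w both occur and their angles differ by exactly pi.

  Monotonicity of a Lipschitz function with almost everywhere nonnegative derivative comes from
  the fact that Lipschitz maps send null sets to null sets.\<close>

lemma negligible_lipschitz_image:
  fixes f :: "'M::euclidean_space \<Rightarrow> 'N::euclidean_space"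
  assumes "DIM('M) \<le> DIM('N)" and "B-lipschitz_on S f" and "negligible N" and "N \<subseteq> S"
  shows "negligible (f ` N)"
proof (rule negligible_locally_Lipschitz_image[OF assms(1,3)])
  fix x assume "x \<in> N"
  with assms(2,4) have "\<forall>y\<in>N \<inter> UNIV. norm (f y - f x) \<le> B * norm (y - x)"
    by (auto simp: dist_norm dest: lipschitz_onD)
  then show "\<exists>T B. open T \<and> x \<in> T \<and> (\<forall>y\<in>N \<inter> T. norm (f y - f x) \<le> B * norm (y - x))"
    by blast
qed

lemma greaterThanLessThan_diff_negligible_nonempty:
  fixes a b :: real
  assumes "a < b" and "negligible N"
  shows "{a<..<b} - N \<noteq> {}"
proof -
  have "\<not> negligible {a<..<b}"
    using assms(1) negligible_interval(2)[of a b] by (simp add: box_real)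
  then show ?thesis
    using negligible_subset[OF assms(2)] by blast
qed

text \<open>If g b < g a, pick a level y between them that is not a value of g on N; at the
  last time s where g is at least y we have g s = y, so s is outside N and g' s > 0 pushes g above y
  right after s.\<close>
lemma DERIV_pos_off_null_image_imp_le:
  fixes g :: "real \<Rightarrow> real"
  assumes "a \<le> b" and cont: "continuous_on {a..b} g" and negl: "negligible (g ` N)"
    and der: "\<And>t. t \<in> {a<..<b} - N \<Longrightarrow> \<exists>d>0. DERIV g t :> d"
  shows "g a \<le> g b"
proof (rule ccontr)
  assume "\<not> g a \<le> g b"
  then have "\<not> negligible {g b<..<g a}"
    using negligible_interval(2)[of "g b" "g a"] by (simp add: box_real)
  then obtain y where y: "y \<in> {g b<..<g a}" "y \<notin> g ` N"
    using negl negligible_subset by blast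
  define S where "S = {a..b} \<inter> g -` {y..}"
  have "closed S"
    unfolding S_def by (intro continuous_closed_preimage cont) auto
  moreover have "a \<in> S" and bdd: "bdd_above S"
    using y \<open>a \<le> b\<close> by (auto simp: S_def intro: bdd_aboveI[of _ b])
  ultimately have "Sup S \<in> S"
    using closed_contains_Sup by blast
  define s where "s = Sup S"
  have upper: "t \<le> s" if "t \<in> S" for t
    unfolding s_def using that bdd by (rule cSup_upper)
  have s: "a \<le> s" "s \<le> b" "y \<le> g s"
    using \<open>Sup S \<in> S\<close> by (auto simp: S_def s_def)
  obtain x where x: "s \<le> x" "x \<le> b" "g x = y"
    using IVT2'[of g b y s] s y continuous_on_subset[OF cont, of "{s..b}"] by auto
  then have "x \<in> S" using s by (auto simp: S_def)
  then have "g s = y" using upper x by force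
  have "s \<noteq> a" "s \<noteq> b" "s \<notin> N"
    using y \<open>g s = y\<close> by auto
  with s have "s \<in> {a<..<b} - N"
    by auto
  then obtain d where "d > 0" "DERIV g s :> d" using der by blast
  then obtain \<delta> where \<delta>: "\<delta> > 0" "\<And>h. h > 0 \<Longrightarrow> h < \<delta> \<Longrightarrow> g s < g (s + h)"
    using DERIV_pos_inc_right by blast
  define h where "h = min (\<delta> / 2) ((b - s) / 2)"
  have h: "0 < h" "h < \<delta>" "s + h \<le> b"
    using \<delta>(1) \<open>s \<in> {a<..<b} - N\<close> by (auto simp: h_def min_def field_simps)
  then have "g s < g (s + h)" using \<delta>(2) by blast
  then have "s + h \<in> S"
    using h \<open>g s = y\<close> s by (auto simp: S_def)
  then show False using upper h by fastforce
qed

text \<open>Tilting g by e t makes the derivative positive off N, and the image of N under the tilted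
  Lipschitz function is still negligible.\<close>
lemma lipschitz_DERIV_nonneg_ae_imp_le:
  fixes g :: "real \<Rightarrow> real"
  assumes "a \<le> b" and lip: "B-lipschitz_on {a..b} g" and "negligible N"
    and der: "\<And>t. t \<in> {a<..<b} - N \<Longrightarrow> \<exists>d\<ge>0. DERIV g t :> d"
  shows "g a \<le> g b"
proof (rule ccontr)
  assume "\<not> g a \<le> g b"
  define e where "e = (g a - g b) / (b - a + 1)"
  have "e > 0" using \<open>\<not> g a \<le> g b\<close> \<open>a \<le> b\<close> by (simp add: e_def)
  have "e * (b - a) < e * (b - a + 1)" using \<open>e > 0\<close> by simp
  also have "\<dots> = g a - g b" using \<open>a \<le> b\<close> by (simp add: e_def)
  finally have tilt_small: "e * (b - a) < g a - g b" .
  define ge where "ge t = g t + e * t" for t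
  have lip_ge: "(B + e)-lipschitz_on {a..b} ge"
    using lipschitz_on_add[OF lip lipschitz_on_cmult_real_nonneg[OF lipschitz_on_id, where a = e]]
      \<open>e > 0\<close>
    by (simp add: ge_def)
  have "ge a \<le> ge b"
  proof (rule DERIV_pos_off_null_image_imp_le[OF \<open>a \<le> b\<close>])
    show "continuous_on {a..b} ge"
      using lip_ge by (rule lipschitz_on_continuous_on)
    show "negligible (ge ` (N \<inter> {a..b}))"
      using lip_ge \<open>negligible N\<close> negligible_subset[of N "N \<inter> {a..b}"]
      by (intro negligible_lipschitz_image) auto
    fix t assume "t \<in> {a<..<b} - N \<inter> {a..b}"
    then obtain d where "d \<ge> 0" "DERIV g t :> d" using der by auto
    then have "DERIV ge t :> d + e"
      unfolding ge_def by (auto intro!: derivative_eq_intros)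
    then show "\<exists>d>0. DERIV ge t :> d"
      using \<open>d \<ge> 0\<close> \<open>e > 0\<close> add_nonneg_pos by blast
  qed
  then show False using tilt_small by (simp add: ge_def algebra_simps)
qed

lemma lipschitz_DERIV_nonneg_ae_loop_imp_const:
  fixes g :: "real \<Rightarrow> real"
  assumes lip: "B-lipschitz_on {a..b} g" and "g a = g b" and "negligible N"
    and der: "\<And>t. t \<in> {a<..<b} - N \<Longrightarrow> \<exists>d\<ge>0. DERIV g t :> d"
    and "x \<in> {a..b}"
  shows "g x = g a"
proof -
  have mono: "g u \<le> g v" if "a \<le> u" "u \<le> v" "v \<le> b" for u v
  proof (rule lipschitz_DERIV_nonneg_ae_imp_le[OF \<open>u \<le> v\<close> _ \<open>negligible N\<close>])
    show "B-lipschitz_on {u..v} g"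
      using that by (intro lipschitz_on_subset[OF lip]) auto
    show "\<exists>d\<ge>0. DERIV g t :> d" if "t \<in> {u<..<v} - N" for t
      using der that \<open>a \<le> u\<close> \<open>v \<le> b\<close> by auto
  qed
  have "g a \<le> g x" "g x \<le> g b"
    using mono[of a x] mono[of x b] \<open>x \<in> {a..b}\<close> by auto
  then show ?thesis
    using \<open>g a = g b\<close> by linarith
qed

lemma DERIV_const_on_interval:
  fixes g :: "real \<Rightarrow> real"
  assumes "\<And>x. x \<in> {a..b} \<Longrightarrow> g x = k" and "t \<in> {a<..<b}" and "DERIV g t :> d"
  shows "d = 0"
proof (rule DERIV_local_const[OF \<open>DERIV g t :> d\<close>])
  show "0 < min (t - a) (b - t)" using assms(2) by simp
  show "\<forall>y. \<bar>t - y\<bar> < min (t - a) (b - t) \<longrightarrow> g t = g y"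
  proof (intro allI impI)
    fix y assume "\<bar>t - y\<bar> < min (t - a) (b - t)"
    then have "y \<in> {a..b}" by (auto simp: abs_less_iff)
    then show "g t = g y" using assms(1,2) by simp
  qed
qed

text \<open>Otherwise g' < 0 off N, so -g is constant on [a, b] and g' vanishes off N.\<close>
lemma lipschitz_loop_ex_DERIV_pos:
  fixes g d :: "real \<Rightarrow> real"
  assumes "a < b" and lip: "B-lipschitz_on {a..b} g" and "g a = g b" and "negligible N"
    and der: "\<And>t. t \<in> {a<..<b} - N \<Longrightarrow> DERIV g t :> d t \<and> d t \<noteq> 0"
  shows "\<exists>t\<in>{a<..<b} - N. d t > 0"
proof (rule ccontr)
  assume "\<not> ?thesis"
  then have neg: "d t < 0" if "t \<in> {a<..<b} - N" for t
    using der that by force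
  have const: "- g x = - g a" if "x \<in> {a..b}" for x
  proof (rule lipschitz_DERIV_nonneg_ae_loop_imp_const[OF _ _ \<open>negligible N\<close> _ that])
    show "B-lipschitz_on {a..b} (\<lambda>t. - g t)" using lip by simp
    show "- g a = - g b" using \<open>g a = g b\<close> by simp
    fix t assume "t \<in> {a<..<b} - N"
    then have "DERIV (\<lambda>t. - g t) t :> - d t"
      using der by (auto intro!: derivative_eq_intros)
    then show "\<exists>d\<ge>0. DERIV (\<lambda>t. - g t) t :> d"
      using neg[OF \<open>t \<in> {a<..<b} - N\<close>] by (intro exI[of _ "- d t"]) auto
  qed
  obtain t where t: "t \<in> {a<..<b} - N"
    using greaterThanLessThan_diff_negligible_nonempty[OF \<open>a < b\<close> \<open>negligible N\<close>] by blast
  have "d t = 0"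
  proof (rule DERIV_const_on_interval)
    show "DERIV g t :> d t" using der[OF t] by blast
    show "t \<in> {a<..<b}" using t by blast
    show "g x = g a" if "x \<in> {a..b}" for x
      using const[OF that] by simp
  qed
  then show False using der[OF t] by blast
qed

lemma bounded_linear_compose_lipschitz_on:
  assumes "bounded_linear f" and "B-lipschitz_on S g"
  obtains C where "C-lipschitz_on S (\<lambda>x. f (g x))"
proof -
  obtain D where "D-lipschitz_on (g ` S) f"
    using bounded_linear.lipschitz_boundE[OF assms(1)] by blast
  then show ?thesis
    using that lipschitz_on_compose2[OF assms(2)] by blast
qed

lemma has_real_derivative_Re_Im_mult:
  fixes c :: "real \<Rightarrow> complex"
  assumes "c differentiable (at t)"
  shows "((\<lambda>t. Re (c t * k)) has_real_derivative Re (vector_derivative c (at t) * k)) (at t)"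
    and "((\<lambda>t. Im (c t * k)) has_real_derivative Im (vector_derivative c (at t) * k)) (at t)"
proof -
  have "(c has_vector_derivative vector_derivative c (at t)) (at t)"
    using assms vector_derivative_works by blast
  then have "((\<lambda>t. c t * k) has_vector_derivative vector_derivative c (at t) * k) (at t)"
    by (rule has_vector_derivative_mult_left)
  then show "((\<lambda>t. Re (c t * k)) has_real_derivative Re (vector_derivative c (at t) * k)) (at t)"
    and "((\<lambda>t. Im (c t * k)) has_real_derivative Im (vector_derivative c (at t) * k)) (at t)"
    by (auto simp: has_vector_derivative_complex_iff)
qed

lemma complex_eq_Re_mult_cnj:
  assumes "cmod w = 1" and "Im (z * cnj w) = 0"
  shows "z = of_real (Re (z * cnj w)) * w"
proof -
  have "z * cnj w = of_real (Re (z * cnj w))"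
    using assms(2) by (simp add: complex_eq_iff)
  moreover have "cnj w * w = 1"
    using assms(1) complex_norm_square[of w] by (simp add: mult.commute)
  ultimately show ?thesis
    by (metis mult.assoc mult.right_neutral)
qed

lemma angle_of_real_mult: "0 < r \<Longrightarrow> angle (of_real r * z) = angle z"
  unfolding angle_def by (simp add: Arg_times_of_real)

lemma angle_uminus:
  assumes "z \<noteq> 0"
  shows "\<bar>angle z - angle (- z)\<bar> = pi"
proof -
  have "- pi < Arg z" "Arg z \<le> pi"
    using Arg_bounded[of z] by auto
  moreover have "Arg (- z) = (if Arg z \<le> 0 then Arg z + pi else Arg z - pi)"
    using Arg_minus[OF assms] .
  ultimately show ?thesis
    unfolding angle_def by (smt (verit))
qed

lemma cis_angle: "z \<noteq> 0 \<Longrightarrow> cis (angle z) = sgn z"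
  unfolding angle_def by (simp add: cis_Arg flip: cis_mult)

lemma Im_mult_cnj_cis_nonneg:
  assumes "m \<le> angle z" and "angle z \<le> m + pi"
  shows "0 \<le> Im (z * cnj (cis m))"
proof (cases "z = 0")
  case False
  have "z = of_real (cmod z) * cis (angle z)"
    using False by (simp add: cis_angle sgn_div_norm scaleR_conv_of_real[symmetric])
  then have "z * cnj (cis m) = of_real (cmod z) * cis (angle z - m)"
    by (metis cis_cnj cis_mult diff_conv_add_uminus mult.assoc)
  moreover have "0 \<le> sin (angle z - m)"
    using assms by (intro sin_ge_zero) auto
  ultimately show ?thesis by simp
qed simp

lemma pairwise_dist_le_imp_subset_interval:
  fixes A :: "real set"
  assumes "\<And>x y. x \<in> A \<Longrightarrow> y \<in> A \<Longrightarrow> \<bar>x - y\<bar> \<le> r"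
  obtains m where "A \<subseteq> {m..m + r}"
proof (cases "A = {}")
  case False
  then obtain x0 where "x0 \<in> A" by blast
  then have bdd: "bdd_below A"
    using assms by (intro bdd_belowI[of _ "x0 - r"]) (force simp: abs_le_iff)
  have "A \<subseteq> {Inf A..Inf A + r}"
  proof
    fix x assume "x \<in> A"
    have "Inf A \<le> x"
      using \<open>x \<in> A\<close> bdd by (rule cInf_lower)
    moreover have "x - r \<le> Inf A"
      using False by (rule cInf_greatest) (use assms \<open>x \<in> A\<close> in \<open>force simp: abs_le_iff\<close>)
    ultimately show "x \<in> {Inf A..Inf A + r}" by simp
  qed
  then show ?thesis using that by blast
qed (use that in blast)

lemma lipschitz_loop_in_half_plane_flat:
  fixes c :: "real \<Rightarrow> complex"
  assumes lip: "B-lipschitz_on {a..b} c" and "c a = c b" and "negligible N"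
    and der: "\<And>t. t \<in> {a<..<b} - N \<Longrightarrow>
                c differentiable (at t) \<and> 0 \<le> Im (vector_derivative c (at t) * k)"
  shows "\<forall>t\<in>{a..b}. Im (c t * k) = Im (c a * k)"
    and "\<forall>t\<in>{a<..<b} - N. Im (vector_derivative c (at t) * k) = 0"
proof -
  obtain C where lip_Im: "C-lipschitz_on {a..b} (\<lambda>t. Im (c t * k))"
    using bounded_linear_compose_lipschitz_on[OF
        bounded_linear_compose[OF bounded_linear_Im bounded_linear_mult_left] lip] .
  have der_Im: "DERIV (\<lambda>t. Im (c t * k)) t :> Im (vector_derivative c (at t) * k)"
    if "t \<in> {a<..<b} - N" for t
    using has_real_derivative_Re_Im_mult(2)[of c t k] der[OF that] by blast
  show const: "\<forall>t\<in>{a..b}. Im (c t * k) = Im (c a * k)"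
  proof
    fix t assume "t \<in> {a..b}"
    show "Im (c t * k) = Im (c a * k)"
    proof (rule lipschitz_DERIV_nonneg_ae_loop_imp_const[OF lip_Im _ \<open>negligible N\<close> _ \<open>t \<in> {a..b}\<close>])
      show "Im (c a * k) = Im (c b * k)" using \<open>c a = c b\<close> by simp
      show "\<exists>d\<ge>0. DERIV (\<lambda>t. Im (c t * k)) s :> d" if "s \<in> {a<..<b} - N" for s
        using der_Im[OF that] der[OF that] by blast
    qed
  qed
  show "\<forall>t\<in>{a<..<b} - N. Im (vector_derivative c (at t) * k) = 0"
  proof
    fix t assume t: "t \<in> {a<..<b} - N"
    have "Im (c x * k) = Im (c a * k)" if "x \<in> {a..b}" for x
      using const that by blast
    then show "Im (vector_derivative c (at t) * k) = 0"
      by (rule DERIV_const_on_interval[OF _ _ der_Im[OF t]]) (use t in auto)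
  qed
qed

lemma curve_on_line_image_segment:
  fixes c :: "real \<Rightarrow> complex"
  assumes "a \<le> b" and cont: "continuous_on {a..b} c" and "cmod w = 1"
    and line: "\<And>t. t \<in> {a..b} \<Longrightarrow> Im (c t * cnj w) = Im (c a * cnj w)"
  shows "\<exists>p q. c ` {a..b} = closed_segment p q"
proof -
  define h where "h t = Re ((c t - c a) * cnj w)" for t
  define \<phi> where "\<phi> s = c a + s *\<^sub>R w" for s
  have c_eq: "c t = \<phi> (h t)" if "t \<in> {a..b}" for t
    using complex_eq_Re_mult_cnj[OF \<open>cmod w = 1\<close>, of "c t - c a"] line[OF that]
    by (simp add: \<phi>_def h_def scaleR_conv_of_real algebra_simps)
  have "continuous_on {a..b} h"
    unfolding h_def by (intro continuous_intros cont)
  then obtain p q where pq: "h ` {a..b} = {p..q}" "p \<le> q"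
    using continuous_image_closed_interval[OF \<open>a \<le> b\<close>] by blast
  have "c ` {a..b} = \<phi> ` h ` {a..b}"
    using c_eq by (force simp: image_image intro!: image_cong)
  also have "\<dots> = \<phi> ` closed_segment p q"
    using pq by (simp add: closed_segment_eq_real_ivl1)
  also have "\<dots> = (+) (c a) ` (\<lambda>s. s *\<^sub>R w) ` closed_segment p q"
    by (simp add: \<phi>_def image_image)
  also have "\<dots> = closed_segment (\<phi> p) (\<phi> q)"
    by (simp add: closed_segment_linear_image[OF linear_scaleR_left, symmetric]
        closed_segment_translation[symmetric] \<phi>_def)
  finally show ?thesis by blast
qed

lemma lipschitz_loop_on_line_reverses:
  fixes c :: "real \<Rightarrow> complex"
  assumes "a < b" and lip: "B-lipschitz_on {a..b} c" and "c a = c b" and "negligible N"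
    and "cmod w = 1"
    and reg: "\<And>t. t \<in> {a<..<b} - N \<Longrightarrow> c differentiable (at t) \<and>
                vector_derivative c (at t) \<noteq> 0 \<and> Im (vector_derivative c (at t) * cnj w) = 0"
  shows "\<exists>t\<in>{a<..<b} - N. \<exists>t'\<in>{a<..<b} - N.
           \<bar>angle (vector_derivative c (at t)) - angle (vector_derivative c (at t'))\<bar> = pi"
proof -
  define h where "h t = Re (c t * cnj w)" for t
  define r where "r t = Re (vector_derivative c (at t) * cnj w)" for t
  have c'_eq: "vector_derivative c (at t) = of_real (r t) * w" if "t \<in> {a<..<b} - N" for t
    unfolding r_def using reg[OF that] by (intro complex_eq_Re_mult_cnj[OF \<open>cmod w = 1\<close>]) blast
  have der_h: "DERIV h t :> r t \<and> r t \<noteq> 0" if "t \<in> {a<..<b} - N" for t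
  proof
    show "DERIV h t :> r t"
      unfolding h_def r_def using reg[OF that] by (rule has_real_derivative_Re_Im_mult(1)[OF conjunct1])
    show "r t \<noteq> 0"
      using reg[OF that] c'_eq[OF that] by auto
  qed
  have der_minus_h: "DERIV (\<lambda>t. - h t) t :> - r t \<and> - r t \<noteq> 0" if "t \<in> {a<..<b} - N" for t
    using der_h[OF that] by (auto intro!: derivative_eq_intros)
  obtain C where lip_h: "C-lipschitz_on {a..b} h"
    unfolding h_def using bounded_linear_compose_lipschitz_on[OF
        bounded_linear_compose[OF bounded_linear_Re bounded_linear_mult_left] lip] .
  have "h a = h b"
    using \<open>c a = c b\<close> by (simp add: h_def)
  obtain t where t: "t \<in> {a<..<b} - N" "0 < r t"
    using lipschitz_loop_ex_DERIV_pos[OF \<open>a < b\<close> lip_h \<open>h a = h b\<close> \<open>negligible N\<close> der_h] by blast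
  obtain t' where t': "t' \<in> {a<..<b} - N" "0 < - r t'"
    using lipschitz_loop_ex_DERIV_pos[OF \<open>a < b\<close> lipschitz_on_minus[OF lip_h] _ \<open>negligible N\<close>
        der_minus_h] \<open>h a = h b\<close> by auto
  have angle_t: "angle (vector_derivative c (at t)) = angle w"
    using c'_eq[OF t(1)] t(2) by (simp add: angle_of_real_mult)
  have "angle (vector_derivative c (at t')) = angle (of_real (- r t') * - w)"
    using c'_eq[OF t'(1)] by simp
  also have "\<dots> = angle (- w)"
    using t'(2) by (rule angle_of_real_mult)
  finally have angle_t': "angle (vector_derivative c (at t')) = angle (- w)" .
  have "w \<noteq> 0"
    using \<open>cmod w = 1\<close> by auto
  then have "\<bar>angle (vector_derivative c (at t)) - angle (vector_derivative c (at t'))\<bar> = pi"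
    unfolding angle_t angle_t' by (rule angle_uminus)
  then show ?thesis
    using t(1) t'(1) by blast
qed

lemma lipschitz_loop_tangents_within_pi:
  fixes c :: "real \<Rightarrow> complex"
  assumes "a < b" and lip: "B-lipschitz_on {a..b} c" and "c a = c b" and "negligible N"
    and reg: "\<And>t. t \<in> {a<..<b} - N \<Longrightarrow>
                c differentiable (at t) \<and> vector_derivative c (at t) \<noteq> 0"
    and within: "\<And>t t'. t \<in> {a<..<b} - N \<Longrightarrow> t' \<in> {a<..<b} - N \<Longrightarrow>
        \<bar>angle (vector_derivative c (at t)) - angle (vector_derivative c (at t'))\<bar> \<le> pi"
  shows "\<exists>p q. c ` {a..b} = closed_segment p q"
    and "\<exists>t\<in>{a<..<b} - N. \<exists>t'\<in>{a<..<b} - N.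
           \<bar>angle (vector_derivative c (at t)) - angle (vector_derivative c (at t'))\<bar> = pi"
proof -
  let ?c' = "\<lambda>t. vector_derivative c (at t)"
  let ?A = "(\<lambda>t. angle (?c' t)) ` ({a<..<b} - N)"
  have "\<bar>x - y\<bar> \<le> pi" if "x \<in> ?A" "y \<in> ?A" for x y
    using that within by blast
  then obtain m where m: "?A \<subseteq> {m..m + pi}"
    by (rule pairwise_dist_le_imp_subset_interval)
  define w where "w = cis m"
  have "cmod w = 1"
    by (simp add: w_def)
  have "0 \<le> Im (?c' t * cnj w)" if "t \<in> {a<..<b} - N" for t
  proof -
    have "angle (?c' t) \<in> {m..m + pi}"
      using m that by blast
    then show ?thesis
      unfolding w_def by (intro Im_mult_cnj_cis_nonneg) auto
  qed
  with reg have "c differentiable (at t) \<and> 0 \<le> Im (?c' t * cnj w)"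
    if "t \<in> {a<..<b} - N" for t
    using that by blast
  note flat = lipschitz_loop_in_half_plane_flat[OF lip \<open>c a = c b\<close> \<open>negligible N\<close> this]
  show "\<exists>p q. c ` {a..b} = closed_segment p q"
    using curve_on_line_image_segment[OF less_imp_le[OF \<open>a < b\<close>]
        lipschitz_on_continuous_on[OF lip] \<open>cmod w = 1\<close>] flat(1)
    by blast
  have "c differentiable (at t) \<and> ?c' t \<noteq> 0 \<and> Im (?c' t * cnj w) = 0"
    if "t \<in> {a<..<b} - N" for t
    using reg[OF that] flat(2) that by blast
  then show "\<exists>t\<in>{a<..<b} - N. \<exists>t'\<in>{a<..<b} - N. \<bar>angle (?c' t) - angle (?c' t')\<bar> = pi"
    by (rule lipschitz_loop_on_line_reverses[OF \<open>a < b\<close> lip \<open>c a = c b\<close> \<open>negligible N\<close>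
          \<open>cmod w = 1\<close>])
qed

lemma curve_class_irregular_negligible:
  assumes "curve_class c" and "0 \<le> a" and "b < 2 * pi"
  shows "negligible {t \<in> {a..b}. \<not> (c differentiable (at t) \<and> vector_derivative c (at t) \<noteq> 0)}"
proof -
  have "AE t in lborel. t \<in> {0..<2*pi} \<longrightarrow>
          c differentiable (at t) \<and> vector_derivative c (at t) \<noteq> 0"
    using assms(1) unfolding curve_class_def by blast
  then obtain M where M: "emeasure lborel M = 0" "M \<in> sets lborel"
    "{t \<in> space lborel. \<not> (t \<in> {0..<2*pi} \<longrightarrow>
        c differentiable (at t) \<and> vector_derivative c (at t) \<noteq> 0)} \<subseteq> M"
    by (rule AE_E)
  then have "negligible M"
    by (simp add: negligible_iff_null_sets null_sets_completionI null_setsI)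
  then show ?thesis
    by (rule negligible_subset) (use M(3) assms(2,3) in auto)
qed

theorem lemma3p1:
  fixes c :: "real \<Rightarrow> complex" and t1 t2 :: real
  assumes "curve_class c"
    and "0 \<le> t1" and "t1 < t2" and "t2 < 2 * pi"
    and "c t1 = c t2"
  shows "\<exists>t t'. t \<in> {t1..t2} \<and> t' \<in> {t1..t2} \<and>
           c differentiable (at t) \<and> vector_derivative c (at t) \<noteq> 0 \<and>
           c differentiable (at t') \<and> vector_derivative c (at t') \<noteq> 0 \<and>
           \<bar>angle (vector_derivative c (at t)) - angle (vector_derivative c (at t'))\<bar> \<ge> pi \<and>
           ((\<nexists>a b. c ` {t1..t2} = closed_segment a b) \<longrightarrow>
             \<bar>angle (vector_derivative c (at t)) - angle (vector_derivative c (at t'))\<bar> > pi)"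
proof -
  let ?c' = "\<lambda>t. vector_derivative c (at t)"
  let ?D = "\<lambda>t t'. \<bar>angle (?c' t) - angle (?c' t')\<bar>"
  let ?segment = "\<exists>a b. c ` {t1..t2} = closed_segment a b"
  define N where "N = {t \<in> {t1..t2}. \<not> (c differentiable (at t) \<and> ?c' t \<noteq> 0)}"
  have "negligible N"
    unfolding N_def using assms(1,2,4) by (rule curve_class_irregular_negligible)
  obtain L where "L-lipschitz_on UNIV c"
    using assms(1) unfolding curve_class_def by blast
  then have lip: "L-lipschitz_on {t1..t2} c"
    by (rule lipschitz_on_subset) simp
  have reg: "c differentiable (at t) \<and> ?c' t \<noteq> 0" if "t \<in> {t1<..<t2} - N" for t
    using that by (auto simp: N_def)
  have "\<exists>t\<in>{t1<..<t2} - N. \<exists>t'\<in>{t1<..<t2} - N. pi < ?D t t' \<or> (?D t t' = pi \<and> ?segment)"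
  proof (cases "\<exists>t\<in>{t1<..<t2} - N. \<exists>t'\<in>{t1<..<t2} - N. pi < ?D t t'")
    case False
    then have "?D t t' \<le> pi" if "t \<in> {t1<..<t2} - N" "t' \<in> {t1<..<t2} - N" for t t'
      using that by (simp add: not_less)
    note within_pi = lipschitz_loop_tangents_within_pi[OF assms(3) lip assms(5) \<open>negligible N\<close>
        reg this]
    then show ?thesis
      by force
  qed blast
  then obtain t t' where t: "t \<in> {t1<..<t2} - N" and t': "t' \<in> {t1<..<t2} - N"
    and wide: "pi < ?D t t' \<or> (?D t t' = pi \<and> ?segment)"
    by blast
  from wide have "pi \<le> ?D t t'" and "\<not> ?segment \<longrightarrow> pi < ?D t t'"
    by auto
  moreover have "t \<in> {t1..t2}" "t' \<in> {t1..t2}"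
    using t t' by auto
  ultimately show ?thesis
    using reg[OF t] reg[OF t'] by blast
qed

end
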